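(* Let $L\ge1$ be an integer. For integers $0\le 2M\le N\le L$, \[ Z(L;N,M)=\binom{L+2}{M}\binom{L}{N-M}-\binom{L}{M-1}\binom{L+2}{N-M+1}, \] and for integers $0\le 2M\le N\le 2L$, \[ \widetilde{Z}(L;N,M)=\binom{L}{M}\binom{L}{N-M}-\binom{L}{M-1}\binom{L}{N-M+1}. \]
   Context: In the closed formulas, $\binom{a}{k}=0$ if $k<0$ or $k>a$. In the definitions below, for integers $x$ and $k\ge0$, $\binom{x}{k}=\frac{x(x-1)\cdots(x-k+1)}{k!}$. Define \[ Z(L;N,M)=\sum \binom{L}{N_r}\prod_{n\ge1}\binom{P'_n+M'_n}{M'_n}\binom{P_n+M_n}{M_n},\qquad \widetilde{Z}(L;N,M)=\sum \binom{L}{N_r}\prod_{n\ge1}\binom{P'_n+M'_n+n}{M'_n}\binom{P_n+M_n}{M_n}, \] where each sum runs over all nonnegative integers $N_r$ and finitely supported families of nonnegative integers $(M_n)_{n\ge1},(M'_n)_{n\ge1}$ with $N=N_r+2\sum_n nM'_n$ and $M=\sum_n n(M_n+M'_n)$, and $P'_n=L-N+2\sum_{m>n}(m-n)M'_m$, $P_n=N-2M+2\sum_{m>n}(m-n)M_m$. *)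

theory Defs
  imports Complex_Main
begin

definition gbin :: "int \<Rightarrow> nat \<Rightarrow> real" where
  "gbin x k = (of_int x :: real) gchoose k"

definition cbin :: "nat \<Rightarrow> int \<Rightarrow> int" where
  "cbin a k = (if k < 0 then 0 else int (a choose nat k))"

text \<open>Families (M_n)_{n\<ge>1} are functions nat \<Rightarrow> nat with value 0 at index 0;
  the constraint M = \<Sum> n (M_n + M'_n) forces M_n = M'_n = 0 for n > M,
  so finite support is expressed by vanishing beyond M.\<close>
definition configs :: "nat \<Rightarrow> nat \<Rightarrow> (nat \<times> (nat \<Rightarrow> nat) \<times> (nat \<Rightarrow> nat)) set" where
  "configs N M = {(Nr, Mf, Mpf).
      Mf 0 = 0 \<and> Mpf 0 = 0 \<and> (\<forall>n>M. Mf n = 0 \<and> Mpf n = 0) \<and>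
      N = Nr + 2 * (\<Sum>n\<in>{1..M}. n * Mpf n) \<and>
      M = (\<Sum>n\<in>{1..M}. n * (Mf n + Mpf n))}"

definition Pp :: "nat \<Rightarrow> nat \<Rightarrow> (nat \<Rightarrow> nat) \<Rightarrow> nat \<Rightarrow> nat \<Rightarrow> int" where
  "Pp L N Mpf M n = int L - int N + 2 * (\<Sum>m\<in>{n<..M}. (int m - int n) * int (Mpf m))"

definition Pn :: "nat \<Rightarrow> nat \<Rightarrow> (nat \<Rightarrow> nat) \<Rightarrow> nat \<Rightarrow> int" where
  "Pn N M Mf n = int N - 2 * int M + 2 * (\<Sum>m\<in>{n<..M}. (int m - int n) * int (Mf m))"

definition Z :: "nat \<Rightarrow> nat \<Rightarrow> nat \<Rightarrow> real" where
  "Z L N M = (\<Sum>(Nr, Mf, Mpf)\<in>configs N M.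
      real (L choose Nr) *
      (\<Prod>n\<in>{1..M}. gbin (Pp L N Mpf M n + int (Mpf n)) (Mpf n)
                     * gbin (Pn N M Mf n + int (Mf n)) (Mf n)))"

definition Zt :: "nat \<Rightarrow> nat \<Rightarrow> nat \<Rightarrow> real" where
  "Zt L N M = (\<Sum>(Nr, Mf, Mpf)\<in>configs N M.
      real (L choose Nr) *
      (\<Prod>n\<in>{1..M}. gbin (Pp L N Mpf M n + int (Mpf n) + int n) (Mpf n)
                     * gbin (Pn N M Mf n + int (Mf n)) (Mf n)))"

end

theory Submission
  imports Defs "HOL-Computational_Algebra.Formal_Power_Series"
begin

(* Splitting a configuration into N_r = N - 2k and the partitions (M'_n) of k and (M_n) of M - k
   makes Z and Zt convolutions of L choose (N - 2k) with sums over partitions of products of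
   binomials of vacancy numbers. Removing the first column of the Young diagram yields a recursion
   in the number s of parts, solved by a terminating Saalschuetz sum: with c the coefficient of n
   in the upper arguments, the partitions of t with s parts contribute (a+t+1 choose s)(t-1 choose s-1)
   for c = 1, and (a+1)/(a+t+1) times that for c = 0. Vandermonde's identity over s turns the
   partition sums into (a+2t choose t) and the ballot number (a+2t choose t) - (a+2t choose t-1).
   A second Vandermonde convolution, counting pairs of subsets by their intersection, evaluates Zt;
   finally Z(L;N,M) = Zt(L;N,M) - Zt(L;N-2,M-1), and Pascal's rule for L+2 choose _ gives Z. *)

section \<open>A terminating Saalschuetz sum\<close>

lemma gbinomial_Suc_absorb_comp:
  fixes a :: "'a::field_char_0"
  shows "of_nat (Suc k) * (a gchoose Suc k) = (a - of_nat k) * (a gchoose k)"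
  using gbinomial_mult_1[of a k] by (simp add: algebra_simps)

definition saalschuetz_term :: "real \<Rightarrow> real \<Rightarrow> nat \<Rightarrow> nat \<Rightarrow> real" where
  "saalschuetz_term c u s k =
     (if 1 \<le> k \<and> k \<le> s
      then ((c + u - 1 + real (s - k)) gchoose (s - k)) * (c gchoose k) * ((u - 1) gchoose (k - 1))
      else 0)"

(* Zeilberger's recurrence: the certificate is k(k-1) times the summand, so the sum over k telescopes. *)
lemma saalschuetz_term_recurrence:
  assumes "k \<le> Suc s"
  shows "real s * (real s + 1) * saalschuetz_term c u (Suc s) k
           + real (Suc k) * real k * saalschuetz_term c u (Suc s) (Suc k)
         = (c + real s) * (u + real s) * saalschuetz_term c u s k
           + real k * (real k - 1) * saalschuetz_term c u (Suc s) k"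
proof -
  consider "k = 0" | "k = Suc s" | "1 \<le> k" "k \<le> s" using assms by linarith
  then show ?thesis
  proof cases
    case 3
    define m where "m = s - k"
    have s: "s = m + k" using 3 by (simp add: m_def)
    define A where "A = (c + u - 1 + real m) gchoose m"
    define A1 where "A1 = (c + u - 1 + real (Suc m)) gchoose Suc m"
    define B where "B = c gchoose k"
    define B1 where "B1 = c gchoose Suc k"
    define C where "C = (u - 1) gchoose (k - 1)"
    define C1 where "C1 = (u - 1) gchoose k"
    have T: "saalschuetz_term c u (Suc s) k = A1 * B * C"
      "saalschuetz_term c u s k = A * B * C"
      "saalschuetz_term c u (Suc s) (Suc k) = A * B1 * C1"
      using 3 by (simp_all add: saalschuetz_term_def A_def A1_def B_def B1_def C_def C1_def s Suc_diff_le)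
    have A1: "(real m + 1) * A1 = (c + u + real m) * A"
      using gbinomial_absorption[of m "c + u + real m"] by (simp add: A_def A1_def algebra_simps)
    have B1: "(real k + 1) * B1 = (c - real k) * B"
      using gbinomial_Suc_absorb_comp[of k c] by (simp add: B_def B1_def algebra_simps)
    have C1: "real k * C1 = (u - real k) * C"
      using gbinomial_Suc_absorb_comp[of "k - 1" "u - 1"] 3 by (simp add: C_def C1_def algebra_simps)
    have "real s * (real s + 1) * (A1 * B * C) + real (Suc k) * real k * (A * B1 * C1)
        = (real m + 2 * real k) * ((real m + 1) * A1) * B * C + A * ((real k + 1) * B1) * (real k * C1)
          + real k * (real k - 1) * (A1 * B * C)"
      by (simp add: s algebra_simps)
    also have "\<dots> = ((real m + 2 * real k) * (c + u + real m) + (c - real k) * (u - real k)) * (A * B * C)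
          + real k * (real k - 1) * (A1 * B * C)"
      by (simp only: A1 B1 C1) (simp add: algebra_simps)
    also have "\<dots> = (c + real s) * (u + real s) * (A * B * C) + real k * (real k - 1) * (A1 * B * C)"
      by (simp add: s algebra_simps)
    finally show ?thesis by (simp only: T)
  qed (simp_all add: saalschuetz_term_def)
qed

lemma saalschuetz_sum:
  assumes "1 \<le> s"
  shows "(\<Sum>k\<le>s. saalschuetz_term c u s k)
         = ((c + real s - 1) gchoose s) * ((u + real s - 1) gchoose (s - 1))"
  using assms
proof (induction s rule: nat_induct_at_least)
  case base
  show ?case by (simp add: saalschuetz_term_def)
next
  case (Suc s)
  define G where "G k = real k * (real k - 1) * saalschuetz_term c u (Suc s) k" for k
  have "real s * (real s + 1) * (\<Sum>k\<le>Suc s. saalschuetz_term c u (Suc s) k)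
      = (\<Sum>k\<le>Suc s. (c + real s) * (u + real s) * saalschuetz_term c u s k + (G k - G (Suc k)))"
    unfolding sum_distrib_left
  proof (intro sum.cong refl)
    fix k assume "k \<in> {..Suc s}"
    then show "real s * (real s + 1) * saalschuetz_term c u (Suc s) k
        = (c + real s) * (u + real s) * saalschuetz_term c u s k + (G k - G (Suc k))"
      using saalschuetz_term_recurrence[of k s c u] by (simp add: G_def algebra_simps)
  qed
  also have "\<dots> = (c + real s) * (u + real s) * (\<Sum>k\<le>s. saalschuetz_term c u s k)"
  proof -
    have "(\<Sum>k\<le>Suc s. G k - G (Suc k)) = 0"
      unfolding sum_telescope by (simp add: G_def saalschuetz_term_def)
    moreover have "saalschuetz_term c u s (Suc s) = 0"
      by (simp add: saalschuetz_term_def)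
    ultimately show ?thesis
      by (simp add: sum.distrib sum_distrib_left)
  qed
  also have "\<dots> = ((c + real s) * ((c + real s - 1) gchoose s)) * ((u + real s) * ((u + real s - 1) gchoose (s - 1)))"
    by (simp add: Suc.IH)
  also have "\<dots> = (real s + 1) * ((c + real s) gchoose Suc s) * (real s * ((u + real s) gchoose s))"
    using gbinomial_absorption[of s "c + real s"] gbinomial_absorption[of "s - 1" "u + real s"] \<open>1 \<le> s\<close>
    by (simp add: algebra_simps)
  also have "\<dots> = real s * (real s + 1)
      * (((c + real (Suc s) - 1) gchoose Suc s) * ((u + real (Suc s) - 1) gchoose (Suc s - 1)))"
    by (simp add: algebra_simps)
  finally show ?case
    using \<open>1 \<le> s\<close> by (subst (asm) mult_left_cancel) simp_all
qed

section \<open>Sums over partitions\<close>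

definition partitions :: "nat \<Rightarrow> nat \<Rightarrow> (nat \<Rightarrow> nat) set" where
  "partitions B t = {f. f 0 = 0 \<and> (\<forall>n>B. f n = 0) \<and> (\<Sum>n\<in>{1..B}. n * f n) = t}"

definition partitions_len :: "nat \<Rightarrow> nat \<Rightarrow> nat \<Rightarrow> (nat \<Rightarrow> nat) set" where
  "partitions_len B t s = {f \<in> partitions B t. (\<Sum>n\<in>{1..B}. f n) = s}"

lemma partition_multiplicity_le: "f \<in> partitions B t \<Longrightarrow> f n \<le> t"
proof (cases "n \<in> {1..B}")
  case True
  assume f: "f \<in> partitions B t"
  have "f n \<le> n * f n" using True by simp
  also have "\<dots> \<le> (\<Sum>n\<in>{1..B}. n * f n)" using True by (intro member_le_sum) auto
  finally show ?thesis using f by (simp add: partitions_def)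
qed (auto simp: partitions_def not_le)

lemma finite_partitions: "finite (partitions B t)"
proof (rule finite_subset)
  show "partitions B t \<subseteq> {f. \<forall>n. (n \<in> {..B} \<longrightarrow> f n \<in> {..t}) \<and> (n \<notin> {..B} \<longrightarrow> f n = 0)}"
    by (auto simp: partition_multiplicity_le) (simp add: partitions_def)
  show "finite {f. \<forall>n. (n \<in> {..B} \<longrightarrow> f n \<in> {..t}) \<and> (n \<notin> {..B} \<longrightarrow> f n = (0::nat))}"
    by (rule finite_set_of_finite_funs) auto
qed

lemma num_parts_le:
  assumes "f \<in> partitions B t"
  shows "(\<Sum>n\<in>{1..B}. f n) \<le> t"
proof -
  have "(\<Sum>n\<in>{1..B}. f n) \<le> (\<Sum>n\<in>{1..B}. n * f n)"
    by (rule sum_mono) simp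
  then show ?thesis using assms by (simp add: partitions_def)
qed

lemma partitions_0: "partitions B 0 = {\<lambda>_. 0}"
proof -
  have "f = (\<lambda>_. 0)" if "f \<in> partitions B 0" for f
    using partition_multiplicity_le[OF that] by auto
  then show ?thesis by (auto simp: partitions_def)
qed

lemma partitions_len_eq_empty:
  assumes "t < s \<or> (s = 0 \<and> 0 < t)"
  shows "partitions_len B t s = {}"
proof (intro equals0I)
  fix f assume f: "f \<in> partitions_len B t s"
  then have "s \<le> t" using num_parts_le by (auto simp: partitions_len_def)
  moreover have "t = 0" if "s = 0"
  proof -
    have "\<forall>n\<in>{1..B}. f n = 0" using f that by (simp add: partitions_len_def)
    then show ?thesis using f by (simp add: partitions_len_def partitions_def)
  qed
  ultimately show False using assms by auto
qed

(* The upper arguments are vacancy numbers plus multiplicities: with c = 0 these are the binomials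
   of Z (a = L - N for (M'_n), a = N - 2M for (M_n)), with c = 1 those of Zt for (M'_n). *)
definition vacancy_prod :: "real \<Rightarrow> real \<Rightarrow> nat \<Rightarrow> (nat \<Rightarrow> nat) \<Rightarrow> real" where
  "vacancy_prod c a B f = (\<Prod>n\<in>{1..B}.
     (a + 2 * (\<Sum>m\<in>{n<..B}. (real m - real n) * real (f m)) + real (f n) + c * real n) gchoose f n)"

definition vacancy_sum :: "real \<Rightarrow> real \<Rightarrow> nat \<Rightarrow> nat \<Rightarrow> real" where
  "vacancy_sum c a B t = (\<Sum>f\<in>partitions B t. vacancy_prod c a B f)"

definition vacancy_sum_len :: "real \<Rightarrow> real \<Rightarrow> nat \<Rightarrow> nat \<Rightarrow> nat \<Rightarrow> real" where
  "vacancy_sum_len c a B t s = (\<Sum>f\<in>partitions_len B t s. vacancy_prod c a B f)"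

lemma vacancy_sum_eq_sum_len: "vacancy_sum c a B t = (\<Sum>s\<le>t. vacancy_sum_len c a B t s)"
  unfolding vacancy_sum_def vacancy_sum_len_def partitions_len_def
  by (rule sum.group[symmetric]) (auto simp: finite_partitions dest: num_parts_le)

lemma vacancy_sum_len_0: "vacancy_sum_len c a B 0 s = of_bool (s = 0)"
proof -
  have "partitions_len B 0 s = (if s = 0 then {\<lambda>_. 0} else {})"
    by (auto simp: partitions_len_def partitions_0)
  then show ?thesis by (simp add: vacancy_sum_len_def vacancy_prod_def)
qed

lemma vacancy_sum_len_eq_0:
  "t < s \<or> (s = 0 \<and> 0 < t) \<Longrightarrow> vacancy_sum_len c a B t s = 0"
  by (simp add: vacancy_sum_len_def partitions_len_eq_empty)

lemma atLeast1_atMost_Suc_split: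
  "(\<Sum>n\<in>{1..Suc B}. g n) = g 1 + (\<Sum>n\<in>{1..B}. g (Suc n))"
  "(\<Prod>n\<in>{1..Suc B}. g n) = g 1 * (\<Prod>n\<in>{1..B}. g (Suc n))"
  by (subst sum.atLeast_Suc_atMost prod.atLeast_Suc_atMost, simp,
      simp only: sum.atLeast_Suc_atMost_Suc_shift prod.atLeast_Suc_atMost_Suc_shift comp_def)+

lemma sum_greaterThanAtMost_Suc_shift:
  "(\<Sum>m\<in>{Suc n<..Suc B}. g m) = (\<Sum>m\<in>{n<..B}. g (Suc m))"
  by (simp only: atLeastSucAtMost_greaterThanAtMost[symmetric] sum.atLeast_Suc_atMost_Suc_shift comp_def)

(* Adds a first column to the Young diagram of g: j new parts 1, and every part of g grows by one. *)
definition raise_parts :: "nat \<Rightarrow> (nat \<Rightarrow> nat) \<Rightarrow> nat \<Rightarrow> nat" where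
  "raise_parts j g n = (if n = 0 then 0 else if n = 1 then j else g (n - 1))"

definition lower_parts :: "(nat \<Rightarrow> nat) \<Rightarrow> nat \<Rightarrow> nat" where
  "lower_parts f n = (if n = 0 then 0 else f (Suc n))"

lemma raise_parts_mem:
  assumes "g \<in> partitions_len B u r"
  shows "raise_parts j g \<in> partitions_len (Suc B) (j + u + r) (j + r)"
proof -
  have "(\<Sum>n\<in>{1..Suc B}. h n (raise_parts j g n)) = h 1 j + (\<Sum>n\<in>{1..B}. h (Suc n) (g n))"
    for h :: "nat \<Rightarrow> nat \<Rightarrow> nat"
    by (simp only: atLeast1_atMost_Suc_split) (simp add: raise_parts_def cong: sum.cong_simp)
  from this[of "\<lambda>n x. n * x"] this[of "\<lambda>_ x. x"] show ?thesis
    using assms by (auto simp: partitions_len_def partitions_def raise_parts_def sum.distrib)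
qed

lemma lower_parts_mem:
  assumes "f \<in> partitions_len (Suc B) t s"
  shows "lower_parts f \<in> partitions_len B (t - s) (s - f 1)" and "f 1 \<le> s"
proof -
  have "(\<Sum>n\<in>{1..Suc B}. h n (f n)) = h 1 (f 1) + (\<Sum>n\<in>{1..B}. h (Suc n) (lower_parts f n))"
    for h :: "nat \<Rightarrow> nat \<Rightarrow> nat"
    by (simp only: atLeast1_atMost_Suc_split) (simp add: lower_parts_def cong: sum.cong_simp)
  from this[of "\<lambda>n x. n * x"] this[of "\<lambda>_ x. x"]
  have parts: "f 1 + (\<Sum>n\<in>{1..B}. lower_parts f n) = s"
    and size: "f 1 + (\<Sum>n\<in>{1..B}. n * lower_parts f n) + (\<Sum>n\<in>{1..B}. lower_parts f n) = t"
    using assms by (auto simp: partitions_len_def partitions_def sum.distrib)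
  show "f 1 \<le> s" using parts by linarith
  show "lower_parts f \<in> partitions_len B (t - s) (s - f 1)"
    using assms parts size by (auto simp: partitions_len_def partitions_def lower_parts_def)
qed

lemma vacancy_prod_raise_parts:
  assumes "g \<in> partitions B u"
  shows "vacancy_prod c a (Suc B) (raise_parts j g)
         = ((a + 2 * real u + real j + c) gchoose j) * vacancy_prod c (a + c) B g"
proof -
  have shift: "(\<Sum>m\<in>{Suc n<..Suc B}. (real m - real (Suc n)) * real (raise_parts j g m))
      = (\<Sum>m\<in>{n<..B}. (real m - real n) * real (g m))" for n
    unfolding sum_greaterThanAtMost_Suc_shift by (rule sum.cong) (auto simp: raise_parts_def)
  have "{0<..B} = {1..B}" by auto
  then have "(\<Sum>m\<in>{0<..B}. (real m - real 0) * real (g m)) = real u"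
    using assms by (simp add: partitions_def flip: of_nat_mult of_nat_sum)
  then have first: "(\<Sum>m\<in>{1<..Suc B}. (real m - real (1::nat)) * real (raise_parts j g m)) = real u"
    using shift[of 0] by simp
  show ?thesis
    unfolding vacancy_prod_def atLeast1_atMost_Suc_split first shift
    by (simp add: raise_parts_def algebra_simps cong: prod.cong_simp)
qed

lemma raise_lower_parts: "f 0 = 0 \<Longrightarrow> raise_parts (f 1) (lower_parts f) = f"
  by (auto simp: raise_parts_def lower_parts_def fun_eq_iff)

lemma lower_raise_parts: "g 0 = 0 \<Longrightarrow> lower_parts (raise_parts j g) = g"
  by (auto simp: raise_parts_def lower_parts_def fun_eq_iff)

lemma vacancy_sum_len_Suc:
  "vacancy_sum_len c a (Suc B) (u + s) s
   = (\<Sum>j\<le>s. ((a + 2 * real u + real j + c) gchoose j) * vacancy_sum_len c (a + c) B u (s - j))"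
proof -
  let ?S = "SIGMA j:{..s}. partitions_len B u (s - j)"
  have "vacancy_sum_len c a (Suc B) (u + s) s
      = (\<Sum>(j, g)\<in>?S. vacancy_prod c a (Suc B) (raise_parts j g))"
    unfolding vacancy_sum_len_def
  proof (rule sum.reindex_bij_witness[where i = "\<lambda>(j, g). raise_parts j g" and j = "\<lambda>f. (f 1, lower_parts f)"])
    fix f assume f: "f \<in> partitions_len (Suc B) (u + s) s"
    then have "f 0 = 0" by (simp add: partitions_len_def partitions_def)
    from raise_lower_parts[of f, OF this] show "(\<lambda>(j, g). raise_parts j g) (f 1, lower_parts f) = f"
      "(\<lambda>(j, g). vacancy_prod c a (Suc B) (raise_parts j g)) (f 1, lower_parts f) = vacancy_prod c a (Suc B) f"
      by simp_all
    show "(f 1, lower_parts f) \<in> ?S" using lower_parts_mem[OF f] by simp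
  next
    fix jg assume "jg \<in> ?S"
    then obtain j g where jg: "jg = (j, g)" and j: "j \<le> s" and g: "g \<in> partitions_len B u (s - j)"
      by auto
    have "g 0 = 0" using g by (simp add: partitions_len_def partitions_def)
    then show "(\<lambda>f. (f 1, lower_parts f)) ((\<lambda>(j, g). raise_parts j g) jg) = jg"
      by (simp add: jg lower_raise_parts) (simp add: raise_parts_def)
    show "(\<lambda>(j, g). raise_parts j g) jg \<in> partitions_len (Suc B) (u + s) s"
      using raise_parts_mem[OF g, of j] j by (simp add: jg)
  qed
  also have "\<dots> = (\<Sum>j\<le>s. \<Sum>g\<in>partitions_len B u (s - j).
                    ((a + 2 * real u + real j + c) gchoose j) * vacancy_prod c (a + c) B g)"
    by (subst sum.Sigma[symmetric])
      (auto simp: partitions_len_def finite_partitions vacancy_prod_raise_parts intro!: sum.cong)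
  finally show ?thesis
    by (simp add: vacancy_sum_len_def sum_distrib_left)
qed

section \<open>Closed forms of the partition sums\<close>

lemma vacancy_sum_len_eqI:
  assumes closed: "\<And>a. a \<in> A \<Longrightarrow> a + c \<in> A"
    and zero: "\<And>a s. a \<in> A \<Longrightarrow> Q a 0 s = of_bool (s = 0)"
    and vanish: "\<And>a t s. a \<in> A \<Longrightarrow> t < s \<or> (s = 0 \<and> 0 < t) \<Longrightarrow> Q a t s = 0"
    and step: "\<And>a u s. a \<in> A \<Longrightarrow> 1 \<le> s \<Longrightarrow>
       (\<Sum>j\<le>s. ((a + 2 * real u + real j + c) gchoose j) * Q (a + c) u (s - j)) = Q a (u + s) s"
    and "a \<in> A" and "t \<le> B"
  shows "vacancy_sum_len c a B t s = Q a t s"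
  using \<open>a \<in> A\<close> \<open>t \<le> B\<close>
proof (induction B arbitrary: a t s)
  case 0
  then show ?case by (simp add: vacancy_sum_len_0 zero)
next
  case (Suc B)
  consider "t = 0" | "t < s \<or> (s = 0 \<and> 0 < t)" | "1 \<le> s" "s \<le> t" by linarith
  then show ?case
  proof cases
    case 1
    then show ?thesis using Suc.prems by (simp add: vacancy_sum_len_0 zero)
  next
    case 2
    then show ?thesis using Suc.prems by (simp add: vacancy_sum_len_eq_0 vanish)
  next
    case 3
    then obtain u where t: "t = u + s" by (metis le_add_diff_inverse2)
    have "vacancy_sum_len c a (Suc B) t s
        = (\<Sum>j\<le>s. ((a + 2 * real u + real j + c) gchoose j) * Q (a + c) u (s - j))"
      using 3 Suc.prems by (simp add: t vacancy_sum_len_Suc Suc.IH closed)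
    also have "\<dots> = Q a t s"
      using 3 Suc.prems by (simp add: t step)
    finally show ?thesis .
  qed
qed

definition vacancy_len_formula :: "real \<Rightarrow> nat \<Rightarrow> nat \<Rightarrow> real" where
  "vacancy_len_formula a t s =
     (if t = 0 then of_bool (s = 0) else if s = 0 then 0
      else ((a + real t + 1) gchoose s) * real ((t - 1) choose (s - 1)))"

lemma sum_atMost_rev: "(\<Sum>j\<le>s. g j) = (\<Sum>k\<le>s. g (s - k))" for s :: nat
  unfolding atMost_atLeast0 by (subst sum.atLeastAtMost_rev) simp

lemma vacancy_len_formula_convolution:
  assumes "1 \<le> s"
  shows "(\<Sum>j\<le>s. ((a + 2 * real u + real j) gchoose j) * vacancy_len_formula a u (s - j))
         = ((a + real u + real s) gchoose s) * real ((u + s - 1) choose (s - 1))"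
proof (cases "u = 0")
  case True
  then have "(\<Sum>j\<le>s. ((a + 2 * real u + real j) gchoose j) * vacancy_len_formula a u (s - j))
      = (\<Sum>j\<le>s. if j = s then (a + real s) gchoose s else 0)"
    by (intro sum.cong refl) (auto simp: vacancy_len_formula_def)
  then show ?thesis using True by simp
next
  case False
  have "(\<Sum>j\<le>s. ((a + 2 * real u + real j) gchoose j) * vacancy_len_formula a u (s - j))
      = (\<Sum>k\<le>s. saalschuetz_term (a + real u + 1) (real u) s k)"
    using False by (subst sum_atMost_rev, intro sum.cong refl)
      (auto simp: vacancy_len_formula_def saalschuetz_term_def binomial_gbinomial of_nat_diff algebra_simps)
  also have "\<dots> = ((a + real u + real s) gchoose s) * real ((u + s - 1) choose (s - 1))"
    using False assms by (simp add: saalschuetz_sum binomial_gbinomial of_nat_diff algebra_simps)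
  finally show ?thesis .
qed

lemma vacancy_sum_len_one:
  assumes "t \<le> B"
  shows "vacancy_sum_len 1 a B t s = vacancy_len_formula a t s"
proof (rule vacancy_sum_len_eqI[where A = UNIV])
  fix a :: real and u s :: nat
  assume "1 \<le> s"
  then show "(\<Sum>j\<le>s. ((a + 2 * real u + real j + 1) gchoose j) * vacancy_len_formula (a + 1) u (s - j))
             = vacancy_len_formula a (u + s) s"
    using vacancy_len_formula_convolution[of s "a + 1" u]
    by (simp add: vacancy_len_formula_def algebra_simps)
qed (use assms in \<open>auto simp: vacancy_len_formula_def binomial_eq_0\<close>)

lemma vacancy_sum_len_zero:
  assumes "0 \<le> a" and "t \<le> B"
  shows "vacancy_sum_len 0 a B t s = (a + 1) / (a + real t + 1) * vacancy_len_formula a t s"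
proof (rule vacancy_sum_len_eqI[where A = "{0..}"])
  fix a :: real and u s :: nat
  assume a: "a \<in> {0..}" and s: "1 \<le> s"
  define t where "t = u + s"
  have pos: "0 < a + real u + 1" "0 < a + real t + 1" using a by auto
  have absorb: "(a + real u + 1) * ((a + real t + 1) gchoose s) = (a + real t + 1) * ((a + real t) gchoose s)"
    using gbinomial_absorb_comp[of "a + real t + 1" s] by (simp add: t_def algebra_simps)
  have "(\<Sum>j\<le>s. ((a + 2 * real u + real j + 0) gchoose j)
          * ((a + 0 + 1) / (a + 0 + real u + 1) * vacancy_len_formula (a + 0) u (s - j)))
      = (a + 1) / (a + real u + 1) * (\<Sum>j\<le>s. ((a + 2 * real u + real j) gchoose j) * vacancy_len_formula a u (s - j))"
    by (simp add: sum_distrib_left mult_ac)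
  also have "\<dots> = (a + 1) * ((a + real t) gchoose s) / (a + real u + 1) * real ((t - 1) choose (s - 1))"
    by (simp only: vacancy_len_formula_convolution[OF s]) (simp add: t_def add.assoc)
  also have "(a + real t) gchoose s = (a + real u + 1) * ((a + real t + 1) gchoose s) / (a + real t + 1)"
    using absorb pos by (simp add: field_simps)
  also have "(a + 1) * \<dots> / (a + real u + 1) * real ((t - 1) choose (s - 1))
      = (a + 1) / (a + real t + 1) * vacancy_len_formula a t s"
    using pos s by (simp add: vacancy_len_formula_def t_def)
  finally show "(\<Sum>j\<le>s. ((a + 2 * real u + real j + 0) gchoose j)
          * ((a + 0 + 1) / (a + 0 + real u + 1) * vacancy_len_formula (a + 0) u (s - j)))
      = (a + 1) / (a + real (u + s) + 1) * vacancy_len_formula a (u + s) s"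
    by (simp only: t_def)
qed (use assms in \<open>auto simp: vacancy_len_formula_def binomial_eq_0\<close>)

lemma sum_vacancy_len_formula: "(\<Sum>s\<le>t. vacancy_len_formula a t s) = (a + 2 * real t) gchoose t"
proof (cases "t = 0")
  case False
  have "(\<Sum>s\<le>t. vacancy_len_formula a t s)
      = (\<Sum>s=0..t. ((a + real t + 1) gchoose s) * (real (t - 1) gchoose (t - s)))"
    unfolding atMost_atLeast0
  proof (intro sum.cong refl)
    fix s assume "s \<in> {0..t}"
    moreover have "real (t - 1) gchoose (t - s) = real ((t - 1) choose (t - s))"
      by (rule binomial_gbinomial[symmetric])
    moreover have "(t - 1) choose (s - 1) = (t - 1) choose (t - s)" if "1 \<le> s" "s \<le> t"
      using binomial_symmetric[of "s - 1" "t - 1"] that by simp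
    ultimately show "vacancy_len_formula a t s = ((a + real t + 1) gchoose s) * (real (t - 1) gchoose (t - s))"
      using False by (auto simp: vacancy_len_formula_def binomial_eq_0)
  qed
  also have "\<dots> = (a + 2 * real t) gchoose t"
    using gbinomial_Vandermonde[of "a + real t + 1" "real (t - 1)" t] False by (simp add: of_nat_diff add_ac)
  finally show ?thesis .
qed (simp add: vacancy_len_formula_def)

lemma vacancy_sum_one:
  "t \<le> B \<Longrightarrow> vacancy_sum 1 a B t = (a + 2 * real t) gchoose t"
  by (simp add: vacancy_sum_eq_sum_len vacancy_sum_len_one sum_vacancy_len_formula)

lemma gchoose_ballot:
  fixes a :: real
  assumes "1 \<le> t" and "a + real t + 1 \<noteq> 0"
  shows "(a + 1) / (a + real t + 1) * ((a + 2 * real t) gchoose t)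
         = ((a + 2 * real t) gchoose t) - ((a + 2 * real t) gchoose (t - 1))"
proof -
  have "(a + real t + 1) * ((a + 2 * real t) gchoose (t - 1)) = real t * ((a + 2 * real t) gchoose t)"
    using gbinomial_mult_1[of "a + 2 * real t" "t - 1"] assms(1) by (simp add: of_nat_diff algebra_simps)
  then show ?thesis
    using assms(2) by (simp add: field_simps)
qed

lemma vacancy_sum_zero:
  assumes "0 \<le> a" and "t \<le> B"
  shows "vacancy_sum 0 a B t
         = ((a + 2 * real t) gchoose t) - (if t = 0 then 0 else (a + 2 * real t) gchoose (t - 1))"
proof -
  have "vacancy_sum 0 a B t = (\<Sum>s\<le>t. (a + 1) / (a + real t + 1) * vacancy_len_formula a t s)"
    using assms by (simp add: vacancy_sum_eq_sum_len vacancy_sum_len_zero)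
  also have "\<dots> = (a + 1) / (a + real t + 1) * ((a + 2 * real t) gchoose t)"
    by (simp only: sum_distrib_left[symmetric] sum_vacancy_len_formula)
  finally show ?thesis
    using assms(1) gchoose_ballot[of t a] by auto
qed

section \<open>Evaluation of Z and Zt\<close>

lemma bij_betw_configs:
  assumes "2 * M \<le> N"
  shows "bij_betw (\<lambda>(k, p, f). (N - 2 * k, f, p))
           (SIGMA k:{..M}. partitions M k \<times> partitions M (M - k)) (configs N M)"
proof (rule bij_betw_byWitness[where f' = "\<lambda>(Nr, Mf, Mpf). (\<Sum>n\<in>{1..M}. n * Mpf n, Mpf, Mf)"])
  show "(\<lambda>(k, p, f). (N - 2 * k, f, p)) ` (SIGMA k:{..M}. partitions M k \<times> partitions M (M - k))
        \<subseteq> configs N M"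
    using assms by (auto simp: configs_def partitions_def distrib_left sum.distrib)
  show "(\<lambda>(Nr, Mf, Mpf). (\<Sum>n\<in>{1..M}. n * Mpf n, Mpf, Mf)) ` configs N M
        \<subseteq> (SIGMA k:{..M}. partitions M k \<times> partitions M (M - k))"
    by (auto simp: configs_def partitions_def distrib_left sum.distrib)
qed (auto simp: configs_def partitions_def)

lemma sum_configs:
  fixes F G :: "nat \<Rightarrow> (nat \<Rightarrow> nat) \<Rightarrow> real"
  assumes "2 * M \<le> N"
  shows "(\<Sum>(Nr, Mf, Mpf)\<in>configs N M. real (L choose Nr) * (\<Prod>n\<in>{1..M}. F n Mpf * G n Mf))
         = (\<Sum>k\<le>M. real (L choose (N - 2 * k))
                    * (\<Sum>p\<in>partitions M k. \<Prod>n\<in>{1..M}. F n p)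
                    * (\<Sum>f\<in>partitions M (M - k). \<Prod>n\<in>{1..M}. G n f))"
proof -
  have "(\<Sum>(Nr, Mf, Mpf)\<in>configs N M. real (L choose Nr) * (\<Prod>n\<in>{1..M}. F n Mpf * G n Mf))
      = (\<Sum>(k, p, f)\<in>(SIGMA k:{..M}. partitions M k \<times> partitions M (M - k)).
           real (L choose (N - 2 * k)) * ((\<Prod>n\<in>{1..M}. F n p) * (\<Prod>n\<in>{1..M}. G n f)))"
    by (subst sum.reindex_bij_betw[OF bij_betw_configs[OF assms], symmetric])
      (simp add: split_def prod.distrib)
  also have "\<dots> = (\<Sum>k\<le>M. \<Sum>p\<in>partitions M k. \<Sum>f\<in>partitions M (M - k).
                    real (L choose (N - 2 * k)) * ((\<Prod>n\<in>{1..M}. F n p) * (\<Prod>n\<in>{1..M}. G n f)))"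
    by (subst sum.Sigma[symmetric]) (auto simp: finite_partitions sum.cartesian_product split_def)
  also have "\<dots> = (\<Sum>k\<le>M. real (L choose (N - 2 * k))
                    * (\<Sum>p\<in>partitions M k. \<Prod>n\<in>{1..M}. F n p)
                    * (\<Sum>f\<in>partitions M (M - k). \<Prod>n\<in>{1..M}. G n f))"
    unfolding mult.assoc[of "real _"] sum_product by (simp add: sum_distrib_left)
  finally show ?thesis .
qed

lemma Z_eq_vacancy_sums:
  assumes "2 * M \<le> N"
  shows "Z L N M = (\<Sum>k\<le>M. real (L choose (N - 2 * k))
                      * vacancy_sum 0 (real L - real N) M k
                      * vacancy_sum 0 (real N - 2 * real M) M (M - k))"
  unfolding Z_def sum_configs[OF assms]
  by (simp add: vacancy_sum_def vacancy_prod_def gbin_def Pp_def Pn_def)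

lemma Zt_eq_vacancy_sums:
  assumes "2 * M \<le> N"
  shows "Zt L N M = (\<Sum>k\<le>M. real (L choose (N - 2 * k))
                      * vacancy_sum 1 (real L - real N) M k
                      * vacancy_sum 0 (real N - 2 * real M) M (M - k))"
  unfolding Zt_def sum_configs[OF assms]
  by (simp add: vacancy_sum_def vacancy_prod_def gbin_def Pp_def Pn_def add_ac)

definition ballot :: "nat \<Rightarrow> int \<Rightarrow> int" where
  "ballot n t = cbin n t - cbin n (t - 1)"

lemma vacancy_sum_zero_ballot:
  assumes "2 * M \<le> N" and "k \<le> M"
  shows "vacancy_sum 0 (real N - 2 * real M) M (M - k) = of_int (ballot (N - 2 * k) (int M - int k))"
proof -
  have a: "real N - 2 * real M + 2 * real (M - k) = real (N - 2 * k)"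
    using assms by (simp add: of_nat_diff)
  have "vacancy_sum 0 (real N - 2 * real M) M (M - k)
      = (real (N - 2 * k) gchoose (M - k)) - (if M - k = 0 then 0 else real (N - 2 * k) gchoose (M - k - 1))"
    using vacancy_sum_zero[of "real N - 2 * real M" "M - k" M] assms unfolding a by simp
  also have "\<dots> = real ((N - 2 * k) choose (M - k))
      - (if M - k = 0 then 0 else real ((N - 2 * k) choose (M - k - 1)))"
    by (simp only: binomial_gbinomial)
  also have "\<dots> = of_int (ballot (N - 2 * k) (int M - int k))"
    using assms by (simp add: ballot_def cbin_def nat_diff_distrib)
  finally show ?thesis .
qed

lemma choose_multinomial_swap:
  fixes L N j k :: nat
  assumes "k \<le> j" and "j + k \<le> N"
  shows "(L choose (N - 2 * k)) * ((L - (N - 2 * k)) choose k) * ((N - 2 * k) choose (j - k))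
         = (L choose j) * (j choose k) * ((L - j) choose (N - j - k))"
proof (cases "N \<le> L + k")
  case True
  have idx: "L - (N - 2 * k) - k = L + k - N" "N - 2 * k - (j - k) = N - j - k"
    "L - j - (N - j - k) = L + k - N"
    using assms True by auto
  have "real ((L choose (N - 2 * k)) * ((L - (N - 2 * k)) choose k) * ((N - 2 * k) choose (j - k)))
      = real ((L choose j) * (j choose k) * ((L - j) choose (N - j - k)))"
    using assms True by (simp add: binomial_fact idx field_simps)
  then show ?thesis by (simp only: of_nat_eq_iff)
next
  case False
  then show ?thesis
    using assms by (cases "N - 2 * k \<le> L"; cases "j \<le> L") (simp_all add: binomial_eq_0)
qed

lemma choose_mult_gchoose_of_nat:
  assumes "2 * k \<le> N"
  shows "real (L choose (N - 2 * k)) * ((real L - real N + 2 * real k) gchoose k)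
         = real ((L choose (N - 2 * k)) * ((L - (N - 2 * k)) choose k))"
proof (cases "N - 2 * k \<le> L")
  case True
  then have "real L - real N + 2 * real k = real (L - (N - 2 * k))"
    using assms by (simp add: of_nat_diff)
  then show ?thesis by (simp add: binomial_gbinomial)
qed (simp add: binomial_eq_0)

(* Both sides count pairs of subsets A, B of an L-set with |A| = j and |B| = N - j;
   the left side sorts them by k = |A \<inter> B|. *)
lemma sum_choose_vandermonde_pairs:
  assumes "2 * j \<le> N"
  shows "(\<Sum>k\<le>j. real (L choose (N - 2 * k)) * ((real L - real N + 2 * real k) gchoose k)
                  * real ((N - 2 * k) choose (j - k)))
         = real ((L choose j) * (L choose (N - j)))"
proof -
  have "(\<Sum>k\<le>j. real (L choose (N - 2 * k)) * ((real L - real N + 2 * real k) gchoose k)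
                  * real ((N - 2 * k) choose (j - k)))
      = real ((L choose j) * (\<Sum>k\<le>j. (j choose k) * ((L - j) choose (N - j - k))))"
    unfolding sum_distrib_left of_nat_sum
  proof (intro sum.cong refl)
    fix k assume "k \<in> {..j}"
    then have k: "k \<le> j" "j + k \<le> N" "2 * k \<le> N" using assms by auto
    have "real (L choose (N - 2 * k)) * ((real L - real N + 2 * real k) gchoose k)
          * real ((N - 2 * k) choose (j - k))
        = real ((L choose (N - 2 * k)) * ((L - (N - 2 * k)) choose k) * ((N - 2 * k) choose (j - k)))"
      by (simp only: choose_mult_gchoose_of_nat[OF k(3)] of_nat_mult)
    also have "\<dots> = real ((L choose j) * (j choose k) * ((L - j) choose (N - j - k)))"
      by (simp only: choose_multinomial_swap[OF k(1,2)])
    finally show "real (L choose (N - 2 * k)) * ((real L - real N + 2 * real k) gchoose k)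
          * real ((N - 2 * k) choose (j - k))
        = real ((L choose j) * ((j choose k) * ((L - j) choose (N - j - k))))"
      by (simp only: mult.assoc)
  qed
  moreover have "(\<Sum>k\<le>j. (j choose k) * ((L - j) choose (N - j - k))) = L choose (N - j)"
    if "j \<le> L"
  proof -
    have "(\<Sum>k\<le>j. (j choose k) * ((L - j) choose (N - j - k)))
        = (\<Sum>k\<le>N - j. (j choose k) * ((L - j) choose (N - j - k)))"
      using assms by (intro sum.mono_neutral_left) auto
    also have "\<dots> = L choose (N - j)"
      using vandermonde[of j "L - j" "N - j"] that by simp
    finally show ?thesis .
  qed
  ultimately show ?thesis
    by (cases "j \<le> L") (simp_all only: binomial_eq_0 not_le mult_0 of_nat_0)
qed

lemma sum_cbin_vandermonde_pairs:
  assumes "j \<le> int M" and "2 * j \<le> int N"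
  shows "(\<Sum>k\<le>M. real (L choose (N - 2 * k)) * ((real L - real N + 2 * real k) gchoose k)
                  * of_int (cbin (N - 2 * k) (j - int k)))
         = of_int (cbin L j * cbin L (int N - j))"
proof (cases "j < 0")
  case False
  then obtain i where j: "j = int i" by (metis nonneg_int_cases not_less)
  have "(\<Sum>k\<le>M. real (L choose (N - 2 * k)) * ((real L - real N + 2 * real k) gchoose k)
                  * of_int (cbin (N - 2 * k) (j - int k)))
      = (\<Sum>k\<le>i. real (L choose (N - 2 * k)) * ((real L - real N + 2 * real k) gchoose k)
                  * real ((N - 2 * k) choose (i - k)))"
    using assms by (subst sum.mono_neutral_right[of "{..M}" "{..i}"]) (auto simp: j cbin_def nat_diff_distrib)
  also have "\<dots> = real ((L choose i) * (L choose (N - i)))"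
    using assms by (intro sum_choose_vandermonde_pairs) (simp add: j)
  finally show ?thesis
    using assms by (simp add: j cbin_def nat_diff_distrib of_nat_diff)
qed (simp add: cbin_def)

lemma Zt_eq_sum:
  assumes "2 * M \<le> N"
  shows "Zt L N M = (\<Sum>k\<le>M. real (L choose (N - 2 * k)) * ((real L - real N + 2 * real k) gchoose k)
                              * of_int (ballot (N - 2 * k) (int M - int k)))"
  using assms by (simp add: Zt_eq_vacancy_sums vacancy_sum_one vacancy_sum_zero_ballot)

lemma Z_eq_sum:
  assumes "2 * M \<le> N" and "N \<le> L"
  shows "Z L N M = (\<Sum>k\<le>M. real (L choose (N - 2 * k))
                      * (((real L - real N + 2 * real k) gchoose k)
                         - (if k = 0 then 0 else (real L - real N + 2 * real k) gchoose (k - 1)))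
                      * of_int (ballot (N - 2 * k) (int M - int k)))"
  unfolding Z_eq_vacancy_sums[OF assms(1)]
  using assms by (intro sum.cong refl)
    (simp add: vacancy_sum_zero_ballot vacancy_sum_zero[of "real L - real N" k M for k])

theorem Zt_closed:
  assumes "2 * M \<le> N"
  shows "Zt L N M = of_int (cbin L (int M) * cbin L (int N - int M)
                            - cbin L (int M - 1) * cbin L (int N - int M + 1))"
proof -
  have "Zt L N M = (\<Sum>k\<le>M. real (L choose (N - 2 * k)) * ((real L - real N + 2 * real k) gchoose k)
                     * of_int (cbin (N - 2 * k) (int M - int k)))
                 - (\<Sum>k\<le>M. real (L choose (N - 2 * k)) * ((real L - real N + 2 * real k) gchoose k)
                     * of_int (cbin (N - 2 * k) ((int M - 1) - int k)))"
    unfolding Zt_eq_sum[OF assms] ballot_def sum_subtractf[symmetric]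
    by (intro sum.cong refl) (simp add: algebra_simps)
  also have "\<dots> = of_int (cbin L (int M) * cbin L (int N - int M))
                 - of_int (cbin L (int M - 1) * cbin L (int N - (int M - 1)))"
    using assms sum_cbin_vandermonde_pairs[of "int M" M N L] sum_cbin_vandermonde_pairs[of "int M - 1" M N L]
    by simp
  finally show ?thesis by (simp add: algebra_simps)
qed

lemma Z_eq_Zt_diff:
  assumes "2 * M \<le> N" and "N \<le> L"
  shows "Z L N M = Zt L N M - (if M = 0 then 0 else Zt L (N - 2) (M - 1))"
proof -
  define A where "A k = real (L choose (N - 2 * k)) * of_int (ballot (N - 2 * k) (int M - int k))" for k
  have "Z L N M = (\<Sum>k\<le>M. A k * ((real L - real N + 2 * real k) gchoose k))
      - (\<Sum>k\<le>M. A k * (if k = 0 then 0 else (real L - real N + 2 * real k) gchoose (k - 1)))"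
    unfolding Z_eq_sum[OF assms] A_def sum_subtractf[symmetric]
    by (intro sum.cong refl) (simp add: algebra_simps)
  also have "(\<Sum>k\<le>M. A k * ((real L - real N + 2 * real k) gchoose k)) = Zt L N M"
    unfolding Zt_eq_sum[OF assms(1)] A_def by (intro sum.cong refl) (simp add: mult_ac)
  also have "(\<Sum>k\<le>M. A k * (if k = 0 then 0 else (real L - real N + 2 * real k) gchoose (k - 1)))
      = (if M = 0 then 0 else Zt L (N - 2) (M - 1))"
  proof (cases M)
    case (Suc m)
    have le: "2 * m \<le> N - 2" using assms Suc by simp
    have "(\<Sum>k\<le>M. A k * (if k = 0 then 0 else (real L - real N + 2 * real k) gchoose (k - 1)))
        = (\<Sum>k\<le>m. A (Suc k) * ((real L - real N + 2 * real (Suc k)) gchoose k))"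
      unfolding Suc by (subst sum.atMost_Suc_shift) simp
    also have "\<dots> = Zt L (N - 2) m"
      unfolding Zt_eq_sum[OF le]
      using assms Suc by (intro sum.cong refl) (simp add: A_def of_nat_diff algebra_simps)
    finally show ?thesis using Suc by simp
  qed simp
  finally show ?thesis .
qed

lemma cbin_Suc: "cbin (Suc a) k = cbin a k + cbin a (k - 1)"
proof (cases "k \<le> 0")
  case False
  then have "nat k = Suc (nat (k - 1))" by simp
  then show ?thesis using False by (simp add: cbin_def)
qed (auto simp: cbin_def)

lemma cbin_add2: "cbin (L + 2) k = cbin L k + 2 * cbin L (k - 1) + cbin L (k - 2)"
  by (simp add: numeral_2_eq_2 cbin_Suc algebra_simps)

theorem Z_closed:
  assumes "2 * M \<le> N" and "N \<le> L"
  shows "Z L N M = of_int (cbin (L + 2) (int M) * cbin L (int N - int M)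
                           - cbin L (int M - 1) * cbin (L + 2) (int N - int M + 1))"
proof (cases M)
  case 0
  then show ?thesis
    using assms by (simp add: Z_eq_Zt_diff Zt_closed cbin_def)
next
  case (Suc m)
  have le: "2 * (M - 1) \<le> N - 2" and "int (N - 2) = int N - 2" using assms Suc by auto
  then show ?thesis
    unfolding Z_eq_Zt_diff[OF assms] Zt_closed[OF assms(1)] Zt_closed[OF le] cbin_add2
    using Suc by (simp add: algebra_simps)
qed

theorem corollary2:
  fixes L N M :: nat
  assumes "L \<ge> 1"
  shows "(2 * M \<le> N \<and> N \<le> L \<longrightarrow>
            Z L N M = real_of_int (cbin (L + 2) (int M) * cbin L (int N - int M)
                                   - cbin L (int M - 1) * cbin (L + 2) (int N - int M + 1)))
       \<and> (2 * M \<le> N \<and> N \<le> 2 * L \<longrightarrow>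
            Zt L N M = real_of_int (cbin L (int M) * cbin L (int N - int M)
                                   - cbin L (int M - 1) * cbin L (int N - int M + 1)))"
  using Z_closed Zt_closed by blast

end
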